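(* Let $L>0$, $\delta_t>0$, integer $n\ge1$, and $p=\frac1n$. The cubic equation in $\alpha$ $$\Big(1-\frac{p(\alpha+\delta_t)}{\alpha+L+\delta_t}\Big)\Big(1+\frac{\delta_t}{\alpha}\Big)^2=1$$ has a unique positive root $\alpha$. With this $\alpha$, set $\tau_x=\frac{\alpha+\delta_t}{\alpha+L+\delta_t}$, $\tau_z=\frac{\tau_x}{\delta_t}-\frac{\alpha(1-\tau_x)}{\delta_tL}$, $C_{\rm IDC}=L^2+\frac{L\alpha^2p}{L+(1-p)(\alpha+\delta_t)}$ and $C_{\rm IFC}=2L+\frac{2L\alpha^2p}{(L+(1-p)(\alpha+\delta_t))\delta_t}$. Then $\frac{\alpha}{\delta_t}=O\big(n+\sqrt{n(L/\delta_t+1)}\big)$, $C_{\rm IDC}=O((L+\delta_t)^2)$ and $C_{\rm IFC}=O(L)$.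
   Context: These are the parameters used in the inner loop of the adaptively regularized accelerated SVRG method (R-Acc-SVRG-G) for regularization parameter $\delta_t$. The $O(\cdot)$ hides absolute constants. *)

theory Defs
  imports Complex_Main
begin

definition svrg_p :: "nat \<Rightarrow> real" where
  "svrg_p n = 1 / real n"

definition alpha_eq :: "real \<Rightarrow> real \<Rightarrow> nat \<Rightarrow> real \<Rightarrow> bool" where
  "alpha_eq L \<delta> n \<alpha> \<longleftrightarrow>
     (1 - svrg_p n * (\<alpha> + \<delta>) / (\<alpha> + L + \<delta>)) * (1 + \<delta> / \<alpha>)^2 = 1"

definition tau_x :: "real \<Rightarrow> real \<Rightarrow> real \<Rightarrow> real" where
  "tau_x L \<delta> \<alpha> = (\<alpha> + \<delta>) / (\<alpha> + L + \<delta>)"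

definition tau_z :: "real \<Rightarrow> real \<Rightarrow> real \<Rightarrow> real" where
  "tau_z L \<delta> \<alpha> = tau_x L \<delta> \<alpha> / \<delta> - \<alpha> * (1 - tau_x L \<delta> \<alpha>) / (\<delta> * L)"

definition C_IDC :: "real \<Rightarrow> real \<Rightarrow> nat \<Rightarrow> real \<Rightarrow> real" where
  "C_IDC L \<delta> n \<alpha> = L^2 + L * \<alpha>^2 * svrg_p n / (L + (1 - svrg_p n) * (\<alpha> + \<delta>))"

definition C_IFC :: "real \<Rightarrow> real \<Rightarrow> nat \<Rightarrow> real \<Rightarrow> real" where
  "C_IFC L \<delta> n \<alpha> = 2 * L + 2 * L * \<alpha>^2 * svrg_p n / ((L + (1 - svrg_p n) * (\<alpha> + \<delta>)) * \<delta>)"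

end

theory Submission
  imports Defs
begin

text \<open>Clearing denominators turns the equation for \<open>\<alpha>\<close> into the cubic
  \<open>p \<alpha>\<^sup>2 (\<alpha> + \<delta>) = (L + (1 - p)(\<alpha> + \<delta>)) \<delta> (2\<alpha> + \<delta>)\<close>.
  The left-hand side of the original equation is strictly decreasing in \<open>\<alpha> > 0\<close>, so there is
  at most one root, and the cubic changes sign on \<open>[0, 4(L + \<delta>)/p]\<close>, so there is one.
  At the root, \<open>\<alpha>\<^sup>2 p / (L + (1 - p)(\<alpha> + \<delta>)) = \<delta> (2\<alpha> + \<delta>) / (\<alpha> + \<delta>) \<le> 2\<delta>\<close>, which bounds
  both constants; bounding \<open>L + (1 - p)(\<alpha> + \<delta>)\<close> by \<open>L + \<alpha> + \<delta>\<close> in the cubic gives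
  \<open>x\<^sup>2 \<le> 2n x + 2n (L/\<delta> + 1)\<close> for \<open>x = \<alpha>/\<delta>\<close>, hence \<open>x \<le> 2n + \<surd>(2n (L/\<delta> + 1))\<close>.\<close>

definition alpha_eq_lhs :: "real \<Rightarrow> real \<Rightarrow> real \<Rightarrow> real \<Rightarrow> real" where
  "alpha_eq_lhs L \<delta> p \<alpha> = (1 - p * (\<alpha> + \<delta>) / (\<alpha> + L + \<delta>)) * (1 + \<delta> / \<alpha>)^2"

lemma alpha_eq_iff_lhs: "alpha_eq L \<delta> n \<alpha> \<longleftrightarrow> alpha_eq_lhs L \<delta> (svrg_p n) \<alpha> = 1"
  unfolding alpha_eq_def alpha_eq_lhs_def ..

lemma alpha_eq_lhs_eq_1_iff_cubic:
  fixes L \<delta> p \<alpha> :: real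
  assumes "\<alpha> > 0" "\<delta> > 0" "L > 0"
  shows "alpha_eq_lhs L \<delta> p \<alpha> = 1 \<longleftrightarrow>
    p * \<alpha>^2 * (\<alpha> + \<delta>) = (L + (1 - p) * (\<alpha> + \<delta>)) * \<delta> * (2 * \<alpha> + \<delta>)"
proof -
  have "alpha_eq_lhs L \<delta> p \<alpha> = (L + (1 - p) * (\<alpha> + \<delta>)) * (\<alpha> + \<delta>)^2 / ((\<alpha> + L + \<delta>) * \<alpha>^2)"
    using assms unfolding alpha_eq_lhs_def by (simp add: field_simps power2_eq_square)
  also have "\<dots> = 1 \<longleftrightarrow> (L + (1 - p) * (\<alpha> + \<delta>)) * (\<alpha> + \<delta>)^2 = (\<alpha> + L + \<delta>) * \<alpha>^2"
    using assms by (auto simp: divide_eq_1_iff)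
  also have "\<dots> \<longleftrightarrow> p * \<alpha>^2 * (\<alpha> + \<delta>) = (L + (1 - p) * (\<alpha> + \<delta>)) * \<delta> * (2 * \<alpha> + \<delta>)"
  proof -
    have "(L + (1 - p) * (\<alpha> + \<delta>)) * (\<alpha> + \<delta>)^2 - (\<alpha> + L + \<delta>) * \<alpha>^2
        = (L + (1 - p) * (\<alpha> + \<delta>)) * \<delta> * (2 * \<alpha> + \<delta>) - p * \<alpha>^2 * (\<alpha> + \<delta>)"
      by (simp add: algebra_simps power2_eq_square)
    then show ?thesis
      by linarith
  qed
  finally show ?thesis .
qed

lemma alpha_eq_lhs_strict_antimono:
  fixes L \<delta> p \<alpha> \<beta> :: real
  assumes "0 < \<alpha>" "\<alpha> < \<beta>" "\<delta> > 0" "L > 0" "0 \<le> p" "p \<le> 1"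
  shows "alpha_eq_lhs L \<delta> p \<beta> < alpha_eq_lhs L \<delta> p \<alpha>"
proof -
  have "(\<alpha> + \<delta>) * (\<beta> + L + \<delta>) \<le> (\<beta> + \<delta>) * (\<alpha> + L + \<delta>)"
    using assms by (simp add: algebra_simps)
  then have ratio_mono: "(\<alpha> + \<delta>) / (\<alpha> + L + \<delta>) \<le> (\<beta> + \<delta>) / (\<beta> + L + \<delta>)"
    using assms by (simp add: divide_simps)
  have "p * ((\<beta> + \<delta>) / (\<beta> + L + \<delta>)) \<le> (\<beta> + \<delta>) / (\<beta> + L + \<delta>)"
    using assms by (intro mult_left_le_one_le) auto
  also have "\<dots> < 1"
    using assms by simp
  finally have first_pos: "0 < 1 - p * (\<beta> + \<delta>) / (\<beta> + L + \<delta>)"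
    by simp
  have first_antimono: "1 - p * (\<beta> + \<delta>) / (\<beta> + L + \<delta>) \<le> 1 - p * (\<alpha> + \<delta>) / (\<alpha> + L + \<delta>)"
    using mult_left_mono[OF ratio_mono \<open>0 \<le> p\<close>] by simp
  have "(1 + \<delta> / \<beta>)^2 < (1 + \<delta> / \<alpha>)^2"
    using assms by (intro power_strict_mono) (auto simp: frac_less2)
  then have "alpha_eq_lhs L \<delta> p \<beta> < (1 - p * (\<beta> + \<delta>) / (\<beta> + L + \<delta>)) * (1 + \<delta> / \<alpha>)^2"
    unfolding alpha_eq_lhs_def using first_pos by simp
  also have "\<dots> \<le> alpha_eq_lhs L \<delta> p \<alpha>"
    unfolding alpha_eq_lhs_def using first_antimono by (intro mult_right_mono) auto
  finally show ?thesis .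
qed

lemma alpha_cubic_le_at_large:
  fixes L \<delta> p b :: real
  assumes \<delta>: "\<delta> > 0" and L: "L > 0" and p: "0 < p" "p \<le> 1" and large: "4 * (L + \<delta>) \<le> p * b"
  shows "(L + (1 - p) * (b + \<delta>)) * \<delta> * (2 * b + \<delta>) \<le> p * b^2 * (b + \<delta>)"
proof -
  have "0 < p * b"
    using large L \<delta> unfolding distrib_left by linarith
  then have "0 < b"
    using p by (simp add: zero_less_mult_iff)
  then have "p * b \<le> b"
    using p by (intro mult_left_le_one_le) auto
  then have b_ge: "\<delta> \<le> b"
    using large \<delta> L unfolding distrib_left by linarith
  have "(L + (1 - p) * (b + \<delta>)) * \<delta> * (2 * b + \<delta>) \<le> (L + b + \<delta>) * \<delta> * (2 * (b + \<delta>))"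
    using p b_ge \<delta> L by (intro mult_mono) (auto simp: mult_left_le_one_le)
  also have "\<dots> \<le> p * b^2 * (b + \<delta>)"
  proof -
    have "\<delta> * L \<le> b * L" "\<delta> * \<delta> \<le> b * \<delta>" "0 \<le> b * L"
      using b_ge \<delta> L by (auto intro: mult_right_mono)
    then have "2 * \<delta> * (L + b + \<delta>) \<le> 4 * (L + \<delta>) * b"
      by (simp add: algebra_simps)
    also have "\<dots> \<le> p * b * b"
      using large b_ge \<delta> by (intro mult_right_mono) auto
    finally have "(2 * \<delta> * (L + b + \<delta>)) * (b + \<delta>) \<le> (p * b * b) * (b + \<delta>)"
      using b_ge \<delta> by (intro mult_right_mono) auto
    then show ?thesis
      by (simp add: power2_eq_square algebra_simps)
  qed
  finally show ?thesis .
qed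

lemma alpha_eq_lhs_eq_1_exists:
  fixes L \<delta> p :: real
  assumes \<delta>: "\<delta> > 0" and L: "L > 0" and p: "0 < p" "p \<le> 1"
  shows "\<exists>\<alpha>>0. alpha_eq_lhs L \<delta> p \<alpha> = 1"
proof -
  define g where "g x = p * x^2 * (x + \<delta>) - (L + (1 - p) * (x + \<delta>)) * \<delta> * (2 * x + \<delta>)" for x
  define b where "b = 4 * (L + \<delta>) / p"
  have "4 * (L + \<delta>) \<le> p * b"
    using p unfolding b_def by simp
  then have "0 \<le> g b"
    using alpha_cubic_le_at_large[OF \<delta> L p] unfolding g_def by simp
  moreover have "0 < (L + (1 - p) * \<delta>) * \<delta> * \<delta>"
    using \<delta> L p by (simp add: add_pos_nonneg)
  then have g0: "g 0 < 0"
    unfolding g_def by simp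
  moreover have "0 \<le> b"
    using p \<delta> L unfolding b_def by simp
  moreover have "\<forall>x. 0 \<le> x \<and> x \<le> b \<longrightarrow> isCont g x"
    unfolding g_def by (auto intro!: continuous_intros)
  ultimately obtain \<alpha> where \<alpha>: "0 \<le> \<alpha>" "g \<alpha> = 0"
    using IVT[of g 0 0 b] by auto
  with g0 have "\<alpha> > 0"
    by (cases "\<alpha> = 0") auto
  with \<alpha> show ?thesis
    using alpha_eq_lhs_eq_1_iff_cubic \<delta> L unfolding g_def by auto
qed

lemma alpha_eq_lhs_eq_1_unique:
  fixes L \<delta> p :: real
  assumes "\<delta> > 0" "L > 0" "0 < p" "p \<le> 1"
  shows "\<exists>!\<alpha>. \<alpha> > 0 \<and> alpha_eq_lhs L \<delta> p \<alpha> = 1"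
proof -
  have "\<alpha> = \<beta>" if "\<alpha> > 0" "\<beta> > 0" "alpha_eq_lhs L \<delta> p \<alpha> = alpha_eq_lhs L \<delta> p \<beta>" for \<alpha> \<beta>
    using that assms alpha_eq_lhs_strict_antimono[of \<alpha> \<beta> \<delta> L p]
      alpha_eq_lhs_strict_antimono[of \<beta> \<alpha> \<delta> L p]
    by (cases \<alpha> \<beta> rule: linorder_cases) auto
  then show ?thesis
    using alpha_eq_lhs_eq_1_exists[OF assms] by (metis (no_types))
qed

lemma le_add_sqrt_of_square_le:
  fixes x b c :: real
  assumes "x^2 \<le> b * x + c" "0 \<le> b" "0 \<le> c"
  shows "x \<le> b + sqrt c"
proof (rule ccontr)
  assume "\<not> x \<le> b + sqrt c"
  then have gt: "b + sqrt c < x"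
    by simp
  have sqrt_nonneg: "0 \<le> sqrt c"
    using assms(3) by simp
  with gt assms have "sqrt c < x" "0 < x"
    by linarith+
  have "c = sqrt c * sqrt c"
    using assms(3) by simp
  also have "\<dots> \<le> sqrt c * x"
    using sqrt_nonneg \<open>sqrt c < x\<close> by (intro mult_left_mono) auto
  finally have "c \<le> sqrt c * x" .
  moreover have "(b + sqrt c) * x < x * x"
    using gt \<open>0 < x\<close> by (intro mult_strict_right_mono)
  ultimately show False
    using assms(1) by (simp add: distrib_right power2_eq_square)
qed

lemma sqrt_two_mul_le:
  fixes x :: real
  assumes "0 \<le> x"
  shows "sqrt (2 * x) \<le> 2 * sqrt x"
proof -
  have "sqrt (2 * x) = sqrt 2 * sqrt x"
    by (rule real_sqrt_mult)
  also have "\<dots> \<le> 2 * sqrt x"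
    using sqrt2_less_2 assms by (intro mult_right_mono) auto
  finally show ?thesis .
qed

lemma alpha_root_ratio_bound:
  fixes L \<delta> p \<alpha> :: real
  assumes \<alpha>: "\<alpha> > 0" and \<delta>: "\<delta> > 0" and L: "L > 0" and p: "0 < p" "p \<le> 1"
    and root: "p * \<alpha>^2 * (\<alpha> + \<delta>) = (L + (1 - p) * (\<alpha> + \<delta>)) * \<delta> * (2 * \<alpha> + \<delta>)"
  shows "\<alpha> / \<delta> \<le> 2 / p + sqrt (2 / p * (L / \<delta> + 1))"
proof (rule le_add_sqrt_of_square_le)
  have "p * \<alpha>^2 * (\<alpha> + \<delta>) \<le> (L + \<alpha> + \<delta>) * \<delta> * (2 * (\<alpha> + \<delta>))"
    unfolding root using p \<alpha> \<delta> L by (intro mult_mono) (auto simp: mult_left_le_one_le)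
  then have "(p * \<alpha>^2) * (\<alpha> + \<delta>) \<le> (2 * \<delta> * (L + \<alpha> + \<delta>)) * (\<alpha> + \<delta>)"
    by (simp add: algebra_simps)
  then have "p * \<alpha>^2 \<le> 2 * \<delta> * (L + \<alpha> + \<delta>)"
    using \<alpha> \<delta> by simp
  then show "(\<alpha> / \<delta>)^2 \<le> 2 / p * (\<alpha> / \<delta>) + 2 / p * (L / \<delta> + 1)"
    using p \<delta> by (simp add: field_simps power2_eq_square)
qed (use p \<delta> L in auto)

lemma alpha_root_weight_bounds:
  fixes L \<delta> p \<alpha> :: real
  assumes "\<alpha> > 0" "\<delta> > 0" "L > 0" "p \<le> 1"
    and root: "p * \<alpha>^2 * (\<alpha> + \<delta>) = (L + (1 - p) * (\<alpha> + \<delta>)) * \<delta> * (2 * \<alpha> + \<delta>)"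
  shows "0 \<le> \<alpha>^2 * p / (L + (1 - p) * (\<alpha> + \<delta>))" "\<alpha>^2 * p / (L + (1 - p) * (\<alpha> + \<delta>)) \<le> 2 * \<delta>"
proof -
  have "L + (1 - p) * (\<alpha> + \<delta>) > 0"
    using assms by (simp add: add_pos_nonneg)
  then have weight: "\<alpha>^2 * p / (L + (1 - p) * (\<alpha> + \<delta>)) = \<delta> * (2 * \<alpha> + \<delta>) / (\<alpha> + \<delta>)"
    using assms by (simp add: field_simps)
  have "\<delta> * (2 * \<alpha> + \<delta>) \<le> 2 * \<delta> * (\<alpha> + \<delta>)"
    using assms by (simp add: algebra_simps)
  then show "0 \<le> \<alpha>^2 * p / (L + (1 - p) * (\<alpha> + \<delta>))" "\<alpha>^2 * p / (L + (1 - p) * (\<alpha> + \<delta>)) \<le> 2 * \<delta>"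
    unfolding weight using assms by (simp_all add: divide_simps)
qed

lemma svrg_p_bounds: "n \<ge> 1 \<Longrightarrow> 0 < svrg_p n \<and> svrg_p n \<le> 1"
  by (simp add: svrg_p_def)

lemma alpha_eq_imp_cubic:
  assumes "L > 0" "\<delta> > 0" "\<alpha> > 0" "alpha_eq L \<delta> n \<alpha>"
  shows "svrg_p n * \<alpha>^2 * (\<alpha> + \<delta>) = (L + (1 - svrg_p n) * (\<alpha> + \<delta>)) * \<delta> * (2 * \<alpha> + \<delta>)"
  using assms alpha_eq_lhs_eq_1_iff_cubic by (simp add: alpha_eq_iff_lhs)

lemma alpha_eq_ratio_bound:
  assumes L: "L > 0" and \<delta>: "\<delta> > 0" and n: "n \<ge> 1" and \<alpha>: "\<alpha> > 0" "alpha_eq L \<delta> n \<alpha>"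
  shows "\<alpha> / \<delta> \<le> 2 * (real n + sqrt (real n * (L / \<delta> + 1)))"
proof -
  have n_eq: "real n = 1 / svrg_p n"
    by (simp add: svrg_p_def)
  have "\<alpha> / \<delta> \<le> 2 * real n + sqrt (2 * (real n * (L / \<delta> + 1)))"
    using alpha_root_ratio_bound[OF \<alpha>(1) \<delta> L _ _ alpha_eq_imp_cubic[OF L \<delta> \<alpha>]] svrg_p_bounds[OF n]
    unfolding n_eq by (simp add: mult.assoc)
  also have "\<dots> \<le> 2 * real n + 2 * sqrt (real n * (L / \<delta> + 1))"
    using L \<delta> by (simp add: sqrt_two_mul_le)
  finally show ?thesis
    by (simp only: distrib_left)
qed

lemma C_IDC_bounds:
  assumes L: "L > 0" and \<delta>: "\<delta> > 0" and n: "n \<ge> 1" and \<alpha>: "\<alpha> > 0" "alpha_eq L \<delta> n \<alpha>"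
  shows "0 \<le> C_IDC L \<delta> n \<alpha>" "C_IDC L \<delta> n \<alpha> \<le> (L + \<delta>)^2"
proof -
  define w where "w = \<alpha>^2 * svrg_p n / (L + (1 - svrg_p n) * (\<alpha> + \<delta>))"
  have w: "0 \<le> w" "w \<le> 2 * \<delta>"
    using alpha_root_weight_bounds[OF \<alpha>(1) \<delta> L _ alpha_eq_imp_cubic[OF L \<delta> \<alpha>]] svrg_p_bounds[OF n]
    unfolding w_def by auto
  have IDC: "C_IDC L \<delta> n \<alpha> = L^2 + L * w"
    unfolding C_IDC_def w_def by simp
  have "0 \<le> L * w" "L * w \<le> L * (2 * \<delta>)"
    using w L by (simp_all add: mult_left_mono)
  moreover have "L^2 + L * (2 * \<delta>) \<le> (L + \<delta>)^2" "0 \<le> L^2"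
    by (simp_all add: power2_sum)
  ultimately show "0 \<le> C_IDC L \<delta> n \<alpha>" "C_IDC L \<delta> n \<alpha> \<le> (L + \<delta>)^2"
    unfolding IDC by linarith+
qed

lemma C_IFC_bounds:
  assumes L: "L > 0" and \<delta>: "\<delta> > 0" and n: "n \<ge> 1" and \<alpha>: "\<alpha> > 0" "alpha_eq L \<delta> n \<alpha>"
  shows "0 \<le> C_IFC L \<delta> n \<alpha>" "C_IFC L \<delta> n \<alpha> \<le> 6 * L"
proof -
  define w where "w = \<alpha>^2 * svrg_p n / (L + (1 - svrg_p n) * (\<alpha> + \<delta>)) / \<delta>"
  have "0 \<le> w * \<delta>" "w * \<delta> \<le> 2 * \<delta>"
    using alpha_root_weight_bounds[OF \<alpha>(1) \<delta> L _ alpha_eq_imp_cubic[OF L \<delta> \<alpha>]] svrg_p_bounds[OF n] \<delta>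
    unfolding w_def by auto
  then have "0 \<le> w" "w \<le> 2"
    using \<delta> by (simp_all add: zero_le_mult_iff)
  then have "0 \<le> L * w" "L * w \<le> L * 2"
    using L by (simp_all add: mult_left_mono)
  moreover have IFC: "C_IFC L \<delta> n \<alpha> = 2 * L + 2 * (L * w)"
    unfolding C_IFC_def w_def by simp
  ultimately show "0 \<le> C_IFC L \<delta> n \<alpha>" "C_IFC L \<delta> n \<alpha> \<le> 6 * L"
    using L by linarith+
qed

theorem proposition3:
  "\<exists>C>0. \<forall>(L::real) (\<delta>::real) (n::nat). L > 0 \<longrightarrow> \<delta> > 0 \<longrightarrow> n \<ge> 1 \<longrightarrow>
      (\<exists>!\<alpha>. \<alpha> > 0 \<and> alpha_eq L \<delta> n \<alpha>) \<and>
      (\<forall>\<alpha>. \<alpha> > 0 \<and> alpha_eq L \<delta> n \<alpha> \<longrightarrow>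
          \<alpha> / \<delta> \<le> C * (real n + sqrt (real n * (L / \<delta> + 1))) \<and>
          \<bar>C_IDC L \<delta> n \<alpha>\<bar> \<le> C * (L + \<delta>)^2 \<and>
          \<bar>C_IFC L \<delta> n \<alpha>\<bar> \<le> C * L)"
proof (intro exI[of _ 6] conjI allI impI)
  fix L \<delta> :: real and n :: nat
  assume L: "L > 0" and \<delta>: "\<delta> > 0" and n: "n \<ge> 1"
  show "\<exists>!\<alpha>. \<alpha> > 0 \<and> alpha_eq L \<delta> n \<alpha>"
    using alpha_eq_lhs_eq_1_unique[OF \<delta> L] svrg_p_bounds[OF n] by (simp add: alpha_eq_iff_lhs)
  fix \<alpha> assume "\<alpha> > 0 \<and> alpha_eq L \<delta> n \<alpha>"
  then have \<alpha>: "\<alpha> > 0" "alpha_eq L \<delta> n \<alpha>"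
    by auto
  have "0 \<le> real n + sqrt (real n * (L / \<delta> + 1))"
    using L \<delta> by simp
  then show "\<alpha> / \<delta> \<le> 6 * (real n + sqrt (real n * (L / \<delta> + 1)))"
    using alpha_eq_ratio_bound[OF L \<delta> n \<alpha>] unfolding distrib_left by linarith
  have "0 \<le> (L + \<delta>)^2"
    by simp
  then show "\<bar>C_IDC L \<delta> n \<alpha>\<bar> \<le> 6 * (L + \<delta>)^2"
    using C_IDC_bounds[OF L \<delta> n \<alpha>] by linarith
  show "\<bar>C_IFC L \<delta> n \<alpha>\<bar> \<le> 6 * L"
    using C_IFC_bounds[OF L \<delta> n \<alpha>] by linarith
qed simp

end
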